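(* For every $\varepsilon>0$, every positive integer $k$ and every positive integer $L$ there is a number $M=M(\varepsilon,k,L)$ such that the following holds: every sufficiently long word $w\in[k]^n$ can be partitioned into at most $M$ subwords (consecutive blocks) such that the total length of those subwords that are not $(\varepsilon,L)$-regular is at most $\varepsilon n$.
   Context: $[k]=\{1,\dots,k\}$. A subword of a word $w$ is a word consisting of consecutive letters of $w$. For a word $w$ of length $n$ and a word $u$ of length $l<n$, the frequency $f_w(u)$ is the probability that a uniformly randomly chosen subword of $w$ of length $l$ (i.e., one of the $n-l+1$ such subwords, chosen uniformly) equals $u$. A word $w\in[k]^n$ is $(\varepsilon,L)$-regular if for every subword $w'$ of $w$ of length at least $\varepsilon n$ we have $|f_w(u)-f_{w'}(u)|<\varepsilon$ for every word $u$ of length at most $L$. *)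

theory Defs
  imports Complex_Main "HOL-Library.Sublist"
begin

text \<open>Words over [k] are lists of naturals with letters in {1..k}.
  freq w u: fraction of the length-|u| windows of w equal to u
  (there are |w|-|u|+1 windows); 0 if |u| > |w|.\<close>

definition freq :: "nat list \<Rightarrow> nat list \<Rightarrow> real" where
  "freq w u = (if length u \<le> length w then
      real (card {i. i < length w - length u + 1 \<and> take (length u) (drop i w) = u})
        / real (length w - length u + 1)
    else 0)"

definition regular :: "nat \<Rightarrow> real \<Rightarrow> nat \<Rightarrow> nat list \<Rightarrow> bool" where
  "regular k \<epsilon> L w \<longleftrightarrow>
     (\<forall>w'. sublist w' w \<and> real (length w') \<ge> \<epsilon> * real (length w) \<longrightarrow>
        (\<forall>u. set u \<subseteq> {1..k} \<and> length u \<le> L \<longrightarrow> \<bar>freq w u - freq w' u\<bar> < \<epsilon>))"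

end

theory Submission
  imports Defs
begin

text \<open>For a block \<open>v\<close> and the finite set \<open>U\<close> of nonempty words of length
  at most \<open>L\<close> over \<open>[k]\<close>, let the energy of \<open>v\<close> be \<open>\<Sum>u\<in>U. occ(v,u)\<^sup>2 / |v|\<close>; the energy of a
  partition of \<open>w\<close> is the sum over its blocks and never exceeds \<open>|U| |w|\<close>. An irregular block
  \<open>v\<close> has a subword \<open>b\<close> of length at least \<open>\<epsilon> |v|\<close> on which the density of some \<open>u \<in> U\<close> is
  off by about \<open>\<epsilon>/2\<close>; by convexity of \<open>c\<^sup>2/a\<close>, cutting \<open>v\<close> around \<open>b\<close> raises the energy by
  \<open>\<epsilon>\<^sup>3 |v| / 4\<close>, minus \<open>O(L |U|)\<close> for occurrences crossing the cuts. Hence, as long as the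
  irregular blocks cover more than \<open>\<epsilon> n\<close> letters, cutting all of them at most triples the
  number of blocks and, for \<open>n\<close> large, raises the energy by \<open>\<epsilon>\<^sup>4 n / 8\<close>. This can happen
  fewer than \<open>8 |U| / \<epsilon>\<^sup>4\<close> times in a row.\<close>

definition occ :: "'a list \<Rightarrow> 'a list \<Rightarrow> nat" where
  "occ v u = card {i. i < length v \<and> take (length u) (drop i v) = u}"

definition density :: "'a list \<Rightarrow> 'a list \<Rightarrow> real" where
  "density v u = real (occ v u) / real (length v)"

lemma occ_le_length: "occ v u \<le> length v"
proof -
  have "{i. i < length v \<and> take (length u) (drop i v) = u} \<subseteq> {..<length v}" by auto
  then show ?thesis unfolding occ_def by (metis card_lessThan card_mono finite_lessThan)
qed

lemma length_le_if_take_eq: "take (length u) xs = u \<Longrightarrow> length u \<le> length xs"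
  by (metis length_take min.bounded_iff order_refl)

lemma occ_append_ge: "occ a u + occ b u \<le> occ (a @ b) u"
proof -
  let ?A = "{i. i < length a \<and> take (length u) (drop i a) = u}"
  let ?B = "{i. i < length b \<and> take (length u) (drop i b) = u}"
  let ?C = "{i. i < length (a @ b) \<and> take (length u) (drop i (a @ b)) = u}"
  let ?B' = "(\<lambda>j. j + length a) ` ?B"
  have "?A \<subseteq> ?C"
  proof
    fix i assume i: "i \<in> ?A"
    then have "length u \<le> length (drop i a)" using length_le_if_take_eq by blast
    then show "i \<in> ?C" using i by auto
  qed
  then have "?A \<union> ?B' \<subseteq> ?C" by auto
  then have "card (?A \<union> ?B') \<le> card ?C"
    by (rule card_mono[rotated]) simp
  moreover have "card (?A \<union> ?B') = card ?A + card ?B"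
    by (subst card_Un_disjoint) (auto simp: card_image inj_on_def)
  ultimately show ?thesis unfolding occ_def by simp
qed

lemma occ_append_le: "occ (a @ b) u \<le> occ a u + occ b u + length u"
proof -
  let ?A = "{i. i < length a \<and> take (length u) (drop i a) = u}"
  let ?B = "{i. i < length b \<and> take (length u) (drop i b) = u}"
  let ?C = "{i. i < length (a @ b) \<and> take (length u) (drop i (a @ b)) = u}"
  let ?D = "{length a - length u..<length a}"
  have "?C \<subseteq> ?A \<union> ?D \<union> (\<lambda>j. j + length a) ` ?B"
  proof
    fix i assume i: "i \<in> ?C"
    consider "i + length u \<le> length a" | "i < length a" "length a < i + length u"
      | "length a \<le> i" by linarith
    then show "i \<in> ?A \<union> ?D \<union> (\<lambda>j. j + length a) ` ?B"
    proof cases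
      case 1
      then show ?thesis using i by (auto simp: take_append)
    next
      case 3
      then show ?thesis using i by (auto intro!: image_eqI[where x = "i - length a"])
    qed auto
  qed
  then have "card ?C \<le> card (?A \<union> ?D \<union> (\<lambda>j. j + length a) ` ?B)"
    by (rule card_mono[rotated]) simp
  also have "\<dots> \<le> card ?A + card ?D + card ((\<lambda>j. j + length a) ` ?B)"
    by (meson add_le_mono card_Un_le le_refl order_trans)
  also have "\<dots> \<le> card ?A + length u + card ?B"
    using card_image_le[of ?B "\<lambda>j. j + length a"] by simp
  finally show ?thesis unfolding occ_def by simp
qed

lemma occ_append3:
  "occ a u + occ b u + occ d u \<le> occ (a @ b @ d) u"
  "occ (a @ b @ d) u \<le> occ a u + occ b u + occ d u + 2 * length u"
  using occ_append_ge[of a u "b @ d"] occ_append_ge[of b u d]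
    occ_append_le[of a "b @ d" u] occ_append_le[of b d u] by linarith+

lemma freq_Nil: "freq v [] = 1"
  by (simp add: freq_def)

lemma freq_eq_occ:
  assumes "u \<noteq> []" "length u \<le> length v"
  shows "freq v u = real (occ v u) / real (length v - length u + 1)"
proof -
  have "0 < length u" using assms(1) by simp
  then have "i < length v" if "i < length v - length u + 1" for i
    using that assms(2) by linarith
  then have "{i. i < length v - length u + 1 \<and> take (length u) (drop i v) = u}
      = {i. i < length v \<and> take (length u) (drop i v) = u}"
    using assms(2) by (auto dest: length_le_if_take_eq)
  then show ?thesis using assms(2) unfolding freq_def occ_def by simp
qed

lemma abs_freq_minus_density_le:
  assumes e: "e > 0" and u: "u \<noteq> []" "length u \<le> L"
    and v: "real L + 4 * real L / e \<le> real (length v)"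
  shows "\<bar>freq v u - density v u\<bar> \<le> e / 4"
proof -
  define m where "m = real (length v)"
  define l where "l = real (length u)"
  define c where "c = real (occ v u)"
  have l: "1 \<le> l" "l \<le> real L" using u unfolding l_def by (auto simp: Suc_le_eq)
  have mL: "4 * real L / e \<le> m - real L" using v unfolding m_def by simp
  moreover have "0 \<le> 4 * real L / e" using e by simp
  ultimately have "l \<le> m" using l by linarith
  then have uv: "length u \<le> length v" unfolding m_def l_def by simp
  have c: "0 \<le> c" "c \<le> m" unfolding c_def m_def using occ_le_length by auto
  have pos: "0 < m - l + 1" "0 < m" using \<open>l \<le> m\<close> l by linarith+
  have "freq v u - density v u = c / (m - l + 1) - c / m"
    using freq_eq_occ[OF u(1) uv] uv unfolding c_def m_def l_def density_def
    by (simp add: of_nat_diff)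
  also have "\<dots> = (c / m) * ((l - 1) / (m - l + 1))"
    using pos by (simp add: field_simps)
  finally have eq: "freq v u - density v u = (c / m) * ((l - 1) / (m - l + 1))" .
  have "l - 1 \<le> e / 4 * (m - l + 1)"
  proof -
    have "real L = e / 4 * (4 * real L / e)" using e by simp
    also have "\<dots> \<le> e / 4 * (m - l + 1)"
      using mL l e by (intro mult_left_mono) auto
    finally show ?thesis using l by linarith
  qed
  then have "(l - 1) / (m - l + 1) \<le> e / 4"
    using pos by (simp add: divide_le_eq)
  moreover have "0 \<le> (l - 1) / (m - l + 1)" "0 \<le> c / m" "c / m \<le> 1"
    using pos l c by auto
  ultimately have "0 \<le> (c / m) * ((l - 1) / (m - l + 1))"
    "(c / m) * ((l - 1) / (m - l + 1)) \<le> e / 4"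
    by (simp_all only: mult_nonneg_nonneg order_trans[OF mult_left_le_one_le])
  then show ?thesis unfolding eq using abs_of_nonneg by metis
qed

lemma square_div_expand:
  fixes a c m :: real
  assumes "a = 0 \<Longrightarrow> c = 0"
  shows "c^2 / a = 2 * m * c - m^2 * a + a * (c / a - m)^2"
  using assms by (cases "a = 0") (simp_all add: field_simps power2_eq_square)

lemma square_div_ge_tangent:
  fixes a c m :: real
  assumes "0 \<le> a" "a = 0 \<Longrightarrow> c = 0"
  shows "2 * m * c - m^2 * a \<le> c^2 / a"
  using square_div_expand[of a c m] assms by simp

text \<open>Convexity of \<open>(c, a) \<mapsto> c\<^sup>2 / a\<close>, quantified: splitting a block gains at least the
  squared deviation of the middle part's density, up to the error \<open>2 l\<close> in additivity of the
  counts \<open>c\<close>.\<close>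
lemma square_div_split3_gain:
  fixes a1 a2 a3 c1 c2 c3 c l :: real
  assumes "0 \<le> c1" "c1 \<le> a1" "0 \<le> c2" "c2 \<le> a2" "0 \<le> c3" "c3 \<le> a3"
    and "c1 + c2 + c3 \<le> c" "c \<le> c1 + c2 + c3 + 2 * l" "c \<le> a1 + a2 + a3"
  shows "a2 * (c2 / a2 - c / (a1 + a2 + a3))^2 - 4 * l
    \<le> c1^2 / a1 + c2^2 / a2 + c3^2 / a3 - c^2 / (a1 + a2 + a3)"
proof -
  define n where "n = a1 + a2 + a3"
  define m where "m = c / n"
  have m: "0 \<le> m" "m \<le> 1" using assms unfolding m_def n_def by (auto simp: divide_le_eq_1)
  have "c^2 / n = 2 * m * c - m^2 * n"
    using square_div_expand[of n c m] assms unfolding n_def m_def by simp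
  moreover have "2 * m * c1 - m^2 * a1 \<le> c1^2 / a1" "2 * m * c3 - m^2 * a3 \<le> c3^2 / a3"
    using assms by (auto intro!: square_div_ge_tangent)
  moreover have "c2^2 / a2 = 2 * m * c2 - m^2 * a2 + a2 * (c2 / a2 - m)^2"
    using assms by (intro square_div_expand) simp
  moreover have "- 4 * l \<le> 2 * m * (c1 + c2 + c3 - c)"
  proof -
    have "(1 - m) * (c1 + c2 + c3 - c) \<le> 0"
      using m assms by (intro mult_nonneg_nonpos) auto
    then show ?thesis using assms by (simp add: algebra_simps)
  qed
  moreover have "m^2 * n = m^2 * a1 + m^2 * a2 + m^2 * a3"
    unfolding n_def by (simp add: algebra_simps)
  ultimately show ?thesis unfolding n_def[symmetric] m_def[symmetric]
    by (simp add: algebra_simps)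
qed

definition energy :: "'a list set \<Rightarrow> 'a list \<Rightarrow> real" where
  "energy U v = (\<Sum>u\<in>U. real (occ v u)^2 / real (length v))"

definition partition_energy :: "'a list set \<Rightarrow> 'a list list \<Rightarrow> real" where
  "partition_energy U ws = (\<Sum>v\<leftarrow>ws. energy U v)"

lemma energy_Nil [simp]: "energy U [] = 0"
  by (simp add: energy_def)

lemma energy_nonneg: "0 \<le> energy U v"
  unfolding energy_def by (rule sum_nonneg) simp

lemma energy_le_card_mult_length:
  assumes "finite U"
  shows "energy U v \<le> real (card U) * real (length v)"
proof -
  have "real (occ v u)^2 / real (length v) \<le> real (length v)" for u
  proof (cases "length v = 0")
    case False
    have "real (occ v u)^2 \<le> real (length v)^2" using occ_le_length[of v u] by simp
    then show ?thesis using False by (simp add: divide_le_eq power2_eq_square)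
  qed simp
  then show ?thesis unfolding energy_def by (rule sum_bounded_above)
qed

lemma partition_energy_le_card_mult_length:
  assumes "finite U"
  shows "partition_energy U ws \<le> real (card U) * real (length (concat ws))"
  unfolding partition_energy_def
  by (induct ws) (auto simp: algebra_simps intro: add_mono energy_le_card_mult_length[OF assms])

lemma partition_energy_append:
  "partition_energy U (xs @ ys) = partition_energy U xs + partition_energy U ys"
  by (simp add: partition_energy_def)

lemma partition_energy_remove_Nil:
  "partition_energy U (filter (\<lambda>x. x \<noteq> []) ws) = partition_energy U ws"
  by (induct ws) (auto simp: partition_energy_def)

lemma energy_split3:
  assumes U: "finite U" "\<forall>u\<in>U. length u \<le> L" and u0: "u0 \<in> U"
  shows "energy U (a @ b @ d) + real (length b) * (density b u0 - density (a @ b @ d) u0)^2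
      - 4 * real L * real (card U) \<le> energy U a + energy U b + energy U d"
proof -
  let ?v = "a @ b @ d"
  define gain where "gain u = real (length b) * (density b u - density ?v u)^2" for u
  define f where "f u = real (occ a u)^2 / real (length a) + real (occ b u)^2 / real (length b)
     + real (occ d u)^2 / real (length d) - real (occ ?v u)^2 / real (length ?v)" for u
  have f_ge: "(if u = u0 then gain u0 else 0) - 4 * real L \<le> f u" if u: "u \<in> U" for u
  proof -
    have len: "real (length ?v) = real (length a) + real (length b) + real (length d)" by simp
    have "gain u - 4 * real (length u) \<le> f u"
      unfolding f_def gain_def density_def len
      using occ_le_length[of a u] occ_le_length[of b u] occ_le_length[of d u]
        occ_le_length[of ?v u] occ_append3(1)[of a u b d] occ_append3(2)[of a b d u]
      by (intro square_div_split3_gain) simp_all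
    moreover have "real (length u) \<le> real L" using U(2) u by simp
    moreover have "0 \<le> gain u" unfolding gain_def by simp
    ultimately show ?thesis by auto
  qed
  have "gain u0 - 4 * real L * real (card U) = (\<Sum>u\<in>U. (if u = u0 then gain u0 else 0) - 4 * real L)"
    using U(1) u0 by (simp add: sum_subtractf)
  also have "\<dots> \<le> (\<Sum>u\<in>U. f u)"
    using f_ge by (rule sum_mono)
  also have "\<dots> = energy U a + energy U b + energy U d - energy U ?v"
    unfolding energy_def f_def by (simp add: sum.distrib sum_subtractf)
  finally show ?thesis unfolding gain_def by simp
qed

definition test_words :: "nat \<Rightarrow> nat \<Rightarrow> nat list set" where
  "test_words k L = {u. set u \<subseteq> {1..k} \<and> u \<noteq> [] \<and> length u \<le> L}"

lemma finite_test_words: "finite (test_words k L)"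
  unfolding test_words_def
  by (rule finite_subset[OF _ finite_lists_length_le[of "{1..k}" L]]) auto

lemma length_test_words_le: "\<forall>u\<in>test_words k L. length u \<le> L"
  unfolding test_words_def by simp

definition split_length :: "real \<Rightarrow> nat \<Rightarrow> real" where
  "split_length e L = (real L + 4 * real L / e) / e"

lemma split_length_nonneg: "e > 0 \<Longrightarrow> 0 \<le> split_length e L"
  by (simp add: split_length_def)

text \<open>Pieces shorter than \<open>split_length\<close> are never split, and each split loses at most
  \<open>2 L\<close> occurrences of each test word straddling the two cuts.\<close>
definition refinement_loss :: "real \<Rightarrow> nat \<Rightarrow> nat \<Rightarrow> real" where
  "refinement_loss e k L = e^3 / 4 * split_length e L + 4 * real L * real (card (test_words k L))"

lemma irregular_split_energy_gain:
  assumes e: "e > 0" and irr: "\<not> regular k e L v" and long: "split_length e L \<le> real (length v)"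
  shows "\<exists>a b d. v = a @ b @ d \<and>
    energy (test_words k L) v + e^3 / 4 * real (length v) - 4 * real L * real (card (test_words k L))
      \<le> energy (test_words k L) a + energy (test_words k L) b + energy (test_words k L) d"
proof -
  from irr obtain b u where "sublist b v" and b: "e * real (length v) \<le> real (length b)"
    and u: "set u \<subseteq> {1..k}" "length u \<le> L" and dev: "e \<le> \<bar>freq v u - freq b u\<bar>"
    unfolding regular_def by auto
  from \<open>sublist b v\<close> obtain a d where v: "v = a @ b @ d" unfolding sublist_def by blast
  have "u \<noteq> []" using dev e by (auto simp: freq_Nil)
  then have uU: "u \<in> test_words k L" using u unfolding test_words_def by simp
  have "real L + 4 * real L / e \<le> e * real (length v)"
    using long e unfolding split_length_def by (simp add: divide_le_eq mult.commute)
  moreover have "real (length b) \<le> real (length v)" using v by simp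
  ultimately have "real L + 4 * real L / e \<le> real (length b)" "real L + 4 * real L / e \<le> real (length v)"
    using b by linarith+
  then have "\<bar>freq v u - density v u\<bar> \<le> e / 4" "\<bar>freq b u - density b u\<bar> \<le> e / 4"
    using abs_freq_minus_density_le[OF e \<open>u \<noteq> []\<close> u(2)] by auto
  then have "e / 2 \<le> \<bar>density b u - density v u\<bar>" using dev by linarith
  then have "(e / 2)^2 \<le> \<bar>density b u - density v u\<bar>^2"
    using e by (intro power_mono) auto
  then have "(e / 2)^2 \<le> (density b u - density v u)^2" by simp
  then have "(e * real (length v)) * (e / 2)^2 \<le> real (length b) * (density b u - density v u)^2"
    using b e by (intro mult_mono) auto
  then have "e^3 / 4 * real (length v) \<le> real (length b) * (density b u - density v u)^2"
    by (simp add: power2_eq_square power3_eq_cube algebra_simps)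
  moreover have "energy (test_words k L) v + real (length b) * (density b u - density v u)^2
      - 4 * real L * real (card (test_words k L))
      \<le> energy (test_words k L) a + energy (test_words k L) b + energy (test_words k L) d"
    using energy_split3[OF finite_test_words length_test_words_le uU, of a b d] unfolding v .
  ultimately have "energy (test_words k L) v + e^3 / 4 * real (length v)
      - 4 * real L * real (card (test_words k L))
      \<le> energy (test_words k L) a + energy (test_words k L) b + energy (test_words k L) d"
    by linarith
  then show ?thesis using v by blast
qed

lemma refine_piece:
  assumes e: "e > 0"
  shows "\<exists>vs. concat vs = v \<and> (\<forall>x\<in>set vs. x \<noteq> []) \<and> length vs \<le> 3 \<and>
    energy (test_words k L) v + e^3 / 4 * (if regular k e L v then 0 else real (length v))
      - refinement_loss e k L \<le> partition_energy (test_words k L) vs"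
proof (cases "regular k e L v \<or> real (length v) < split_length e L")
  case True
  have "e^3 / 4 * (if regular k e L v then 0 else real (length v)) \<le> e^3 / 4 * split_length e L"
  proof (cases "regular k e L v")
    case False
    then have "real (length v) \<le> split_length e L" using True by simp
    then show ?thesis using e False by simp
  qed (use e split_length_nonneg[OF e, of L] in simp)
  moreover have "0 \<le> 4 * real L * real (card (test_words k L))" by simp
  ultimately have "energy (test_words k L) v + e^3 / 4 * (if regular k e L v then 0 else real (length v))
      - refinement_loss e k L \<le> energy (test_words k L) v"
    unfolding refinement_loss_def by linarith
  moreover have "partition_energy (test_words k L) (filter (\<lambda>x. x \<noteq> []) [v]) = energy (test_words k L) v"
    unfolding partition_energy_remove_Nil by (simp add: partition_energy_def)
  ultimately show ?thesis
    by (intro exI[of _ "filter (\<lambda>x. x \<noteq> []) [v]"]) simp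
next
  case False
  then have irr: "\<not> regular k e L v" and long: "split_length e L \<le> real (length v)" by auto
  then obtain a b d where v: "v = a @ b @ d" and gain:
    "energy (test_words k L) v + e^3 / 4 * real (length v) - 4 * real L * real (card (test_words k L))
      \<le> energy (test_words k L) a + energy (test_words k L) b + energy (test_words k L) d"
    using irregular_split_energy_gain[OF e irr long] by blast
  have "0 \<le> e^3 / 4 * split_length e L" using e split_length_nonneg[OF e, of L] by simp
  then have "energy (test_words k L) v + e^3 / 4 * (if regular k e L v then 0 else real (length v))
      - refinement_loss e k L
    \<le> energy (test_words k L) a + energy (test_words k L) b + energy (test_words k L) d"
    using irr gain unfolding refinement_loss_def by simp
  moreover have "partition_energy (test_words k L) (filter (\<lambda>x. x \<noteq> []) [a, b, d])
      = energy (test_words k L) a + energy (test_words k L) b + energy (test_words k L) d"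
    unfolding partition_energy_remove_Nil by (simp add: partition_energy_def)
  moreover have "length (filter (\<lambda>x. x \<noteq> []) [a, b, d]) \<le> 3"
    by (rule order_trans[OF length_filter_le]) simp
  moreover have "concat (filter (\<lambda>x. x \<noteq> []) [a, b, d]) = v"
    using v by simp
  ultimately show ?thesis
    by (intro exI[of _ "filter (\<lambda>x. x \<noteq> []) [a, b, d]"]) simp
qed

lemma refine_partition:
  assumes e: "e > 0"
  shows "\<exists>ws'. concat ws' = concat ws \<and> (\<forall>x\<in>set ws'. x \<noteq> []) \<and> length ws' \<le> 3 * length ws \<and>
    partition_energy (test_words k L) ws
      + e^3 / 4 * real (\<Sum>v\<leftarrow>filter (\<lambda>v. \<not> regular k e L v) ws. length v)
      - refinement_loss e k L * real (length ws)
    \<le> partition_energy (test_words k L) ws'"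
proof (induct ws)
  case Nil
  show ?case by (intro exI[of _ "[]"]) (simp add: partition_energy_def)
next
  case (Cons v ws)
  then obtain ws' where ws': "concat ws' = concat ws" "\<forall>x\<in>set ws'. x \<noteq> []"
    "length ws' \<le> 3 * length ws"
    "partition_energy (test_words k L) ws
      + e^3 / 4 * real (\<Sum>v\<leftarrow>filter (\<lambda>v. \<not> regular k e L v) ws. length v)
      - refinement_loss e k L * real (length ws) \<le> partition_energy (test_words k L) ws'"
    by blast
  obtain vs where vs: "concat vs = v" "\<forall>x\<in>set vs. x \<noteq> []" "length vs \<le> 3"
    "energy (test_words k L) v + e^3 / 4 * (if regular k e L v then 0 else real (length v))
      - refinement_loss e k L \<le> partition_energy (test_words k L) vs"
    using refine_piece[OF e] by blast
  have "real (\<Sum>v\<leftarrow>filter (\<lambda>v. \<not> regular k e L v) (v # ws). length v)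
      = (if regular k e L v then 0 else real (length v))
        + real (\<Sum>v\<leftarrow>filter (\<lambda>v. \<not> regular k e L v) ws. length v)"
    by simp
  moreover have "partition_energy (test_words k L) (v # ws)
      = energy (test_words k L) v + partition_energy (test_words k L) ws"
    by (simp add: partition_energy_def)
  moreover have "refinement_loss e k L * real (length (v # ws))
      = refinement_loss e k L + refinement_loss e k L * real (length ws)"
    by (simp add: algebra_simps)
  moreover have "partition_energy (test_words k L) (vs @ ws')
      = partition_energy (test_words k L) vs + partition_energy (test_words k L) ws'"
    by (rule partition_energy_append)
  ultimately have "partition_energy (test_words k L) (v # ws)
      + e^3 / 4 * real (\<Sum>v\<leftarrow>filter (\<lambda>v. \<not> regular k e L v) (v # ws). length v)
      - refinement_loss e k L * real (length (v # ws))
    \<le> partition_energy (test_words k L) (vs @ ws')"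
    using vs(4) ws'(4) by (simp only: distrib_left)
  moreover have "concat (vs @ ws') = concat (v # ws)" "\<forall>x\<in>set (vs @ ws'). x \<noteq> []"
    "length (vs @ ws') \<le> 3 * length (v # ws)"
    using vs(1-3) ws'(1-3) by auto
  ultimately show ?case by blast
qed

lemma refinement_iteration:
  fixes P good :: "'b list \<Rightarrow> bool" and E :: "'b list \<Rightarrow> real"
  assumes start: "P xs0" "length xs0 \<le> 1" "0 \<le> E xs0"
    and step: "\<And>xs. P xs \<Longrightarrow> length xs \<le> 3^J \<Longrightarrow> \<not> good xs \<Longrightarrow>
      \<exists>ys. P ys \<and> length ys \<le> 3 * length xs \<and> E xs + \<delta> \<le> E ys"
  shows "\<exists>xs. P xs \<and> length xs \<le> 3^J \<and> (good xs \<or> real J * \<delta> \<le> E xs)"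
proof -
  have "\<exists>xs. P xs \<and> length xs \<le> 3^j \<and> (good xs \<or> real j * \<delta> \<le> E xs)" if "j \<le> J" for j
    using that
  proof (induction j)
    case 0
    then show ?case using start by auto
  next
    case (Suc j)
    then obtain xs where xs: "P xs" "length xs \<le> 3^j" "good xs \<or> real j * \<delta> \<le> E xs"
      by auto
    show ?case
    proof (cases "good xs")
      case True
      then show ?thesis using xs by (intro exI[of _ xs]) auto
    next
      case False
      have "(3::nat)^j \<le> 3^J" using Suc.prems by (intro power_increasing) auto
      then have "length xs \<le> 3^J" using xs(2) by linarith
      then obtain ys where "P ys" "length ys \<le> 3 * length xs" "E xs + \<delta> \<le> E ys"
        using step[OF xs(1) _ False] by blast
      then show ?thesis using xs False by (intro exI[of _ ys]) (auto simp: algebra_simps)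
    qed
  qed
  then show ?thesis by blast
qed

lemma refine_partition_energy_increment:
  assumes e: "e > 0"
    and loss: "refinement_loss e k L * 3^J \<le> e^4 * n / 8"
    and ws: "length ws \<le> 3^J" "e * n < real (\<Sum>v\<leftarrow>filter (\<lambda>v. \<not> regular k e L v) ws. length v)"
  shows "\<exists>ws'. concat ws' = concat ws \<and> (\<forall>x\<in>set ws'. x \<noteq> []) \<and> length ws' \<le> 3 * length ws \<and>
    partition_energy (test_words k L) ws + e^4 * n / 8 \<le> partition_energy (test_words k L) ws'"
proof -
  obtain ws' where ws': "concat ws' = concat ws" "\<forall>x\<in>set ws'. x \<noteq> []" "length ws' \<le> 3 * length ws"
    "partition_energy (test_words k L) ws
      + e^3 / 4 * real (\<Sum>v\<leftarrow>filter (\<lambda>v. \<not> regular k e L v) ws. length v)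
      - refinement_loss e k L * real (length ws) \<le> partition_energy (test_words k L) ws'"
    using refine_partition[OF e, where ws = ws] by blast
  have "e^4 * n / 4 = e^3 / 4 * (e * n)" by (simp add: power_numeral_reduce)
  also have "\<dots> \<le> e^3 / 4 * real (\<Sum>v\<leftarrow>filter (\<lambda>v. \<not> regular k e L v) ws. length v)"
    using ws(2) e by (intro mult_left_mono) auto
  finally have gain: "e^4 * n / 4 \<le> \<dots>" .
  have "0 \<le> refinement_loss e k L"
    using split_length_nonneg[OF e, of L] e unfolding refinement_loss_def by simp
  then have "refinement_loss e k L * real (length ws) \<le> refinement_loss e k L * 3^J"
    using ws(1) by (intro mult_left_mono) (auto simp flip: of_nat_power)
  then have "partition_energy (test_words k L) ws + e^4 * n / 8 \<le> partition_energy (test_words k L) ws'"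
    using ws'(4) gain loss by linarith
  then show ?thesis using ws'(1-3) by blast
qed

lemma partition_with_small_irregular_mass:
  fixes w :: "nat list"
  assumes e: "e > 0"
    and J: "real (card (test_words k L)) < real J * e^4 / 8"
    and w: "refinement_loss e k L * 3^J \<le> e^4 * real (length w) / 8"
  shows "\<exists>ws. concat ws = w \<and> (\<forall>v\<in>set ws. v \<noteq> []) \<and> length ws \<le> 3^J \<and>
    real (\<Sum>v\<leftarrow>filter (\<lambda>v. \<not> regular k e L v) ws. length v) \<le> e * real (length w)"
proof (cases "w = []")
  case True
  then show ?thesis by (intro exI[of _ "[]"]) simp
next
  case False
  define n where "n = real (length w)"
  have n: "0 < n" using False unfolding n_def by simp
  define P where "P ws \<longleftrightarrow> concat ws = w \<and> (\<forall>v\<in>set ws. v \<noteq> [])" for ws :: "nat list list"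
  define good where
    "good ws \<longleftrightarrow> real (\<Sum>v\<leftarrow>filter (\<lambda>v. \<not> regular k e L v) ws. length v) \<le> e * n" for ws
  let ?E = "partition_energy (test_words k L)"
  have "\<exists>ys. P ys \<and> length ys \<le> 3 * length xs \<and> ?E xs + e^4 * n / 8 \<le> ?E ys"
    if "P xs" "length xs \<le> 3^J" "\<not> good xs" for xs
    using refine_partition_energy_increment[OF e w[folded n_def], of xs] that
    unfolding P_def good_def by auto
  moreover have "P [w]" "length [w] \<le> 1" "0 \<le> ?E [w]"
    using False energy_nonneg unfolding P_def partition_energy_def by auto
  ultimately obtain xs where
    xs: "P xs" "length xs \<le> 3^J" "good xs \<or> real J * (e^4 * n / 8) \<le> ?E xs"
    using refinement_iteration[of P "[w]" ?E J good "e^4 * n / 8"] by blast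
  have "concat xs = w" using xs(1) unfolding P_def by simp
  then have "?E xs \<le> real (card (test_words k L)) * n"
    using partition_energy_le_card_mult_length[OF finite_test_words, where ws = xs]
    unfolding n_def by simp
  also have "\<dots> < real J * (e^4 * n / 8)"
    using mult_strict_right_mono[OF J n] by (simp add: algebra_simps)
  finally have "good xs" using xs(3) by linarith
  then show ?thesis using xs(1,2) unfolding P_def good_def n_def by blast
qed

theorem lemma14:
  fixes \<epsilon> :: real and k L :: nat
  assumes "\<epsilon> > 0" and "k > 0" and "L > 0"
  shows "\<exists>M::nat. \<exists>N::nat. \<forall>w. length w \<ge> N \<and> set w \<subseteq> {1..k} \<longrightarrow>
           (\<exists>ws. concat ws = w \<and> (\<forall>v\<in>set ws. v \<noteq> []) \<and> length ws \<le> M \<and>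
              real (\<Sum>v\<leftarrow>filter (\<lambda>v. \<not> regular k \<epsilon> L v) ws. length v) \<le> \<epsilon> * real (length w))"
proof -
  obtain J :: nat where "8 * real (card (test_words k L)) / \<epsilon>^4 < real J"
    using reals_Archimedean2 by blast
  then have J: "real (card (test_words k L)) < real J * \<epsilon>^4 / 8"
    using assms(1) by (simp add: divide_less_eq)
  define N where "N = nat \<lceil>8 * refinement_loss \<epsilon> k L * 3^J / \<epsilon>^4\<rceil>"
  have "refinement_loss \<epsilon> k L * 3^J \<le> \<epsilon>^4 * real (length w) / 8" if "N \<le> length w" for w :: "nat list"
  proof -
    have "8 * refinement_loss \<epsilon> k L * 3^J / \<epsilon>^4 \<le> real (length w)"
      using that unfolding N_def by linarith
    then show ?thesis using assms(1) by (simp add: divide_le_eq mult_ac)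
  qed
  then show ?thesis
    using partition_with_small_irregular_mass[OF assms(1) J] by blast
qed

end
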